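(* Let $\mathbb{F}\in\{\mathbb{R},\mathbb{C}\}$, $N\ge2$, and let $\mathcal{P}(M,N)$ be the set of Parseval frames for $\mathbb{F}^N$ with $M$ vectors. Suppose an equiangular Parseval frame exists in $\mathcal{P}(M,N)$. Then $\Phi\in\mathcal{P}(M,N)$ maximizes the $2$-nuclear energy $NE_2$ over $\mathcal{P}(M,N)$ if and only if $\Phi$ is an equiangular Parseval frame.
   Context: A Parseval frame for $\mathbb{F}^N$ is a family $\{\varphi_i\}_{i=1}^M\subseteq\mathbb{F}^N$ whose $N\times M$ matrix $\Phi$ (columns $\varphi_i$) satisfies $\Phi\Phi^*=I$; it is equiangular if all $\|\varphi_i\|$ are equal and all $|\langle\varphi_i,\varphi_j\rangle|$, $i\ne j$, are equal. For $K\subseteq[M]$, $\Phi_K$ is the submatrix of columns indexed by $K$. The nuclear norm of a matrix $F$ is $\|F\|_*=\sum_i\sigma_i(F)$, the sum of its singular values. The $k$-nuclear energy is $NE_k(\Phi)=\sum_{|K|=k}\|\Phi_K\|_*$. *)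

theory Defs
  imports "HOL-Analysis.Analysis" "Jordan_Normal_Form.Char_Poly" "Jordan_Normal_Form.DL_Submatrix"
begin

text \<open>The scalar field
  F is encoded as a subset FF of the complex numbers: FF = Reals (real case) or FF = UNIV
  (complex case); a matrix over F is a complex matrix all of whose entries lie in FF.\<close>

definition cadj :: "complex mat \<Rightarrow> complex mat" where
  "cadj F = mat (dim_col F) (dim_row F) (\<lambda>(i,j). cnj (F $$ (j,i)))"

definition parseval_frame :: "complex set \<Rightarrow> nat \<Rightarrow> nat \<Rightarrow> complex mat \<Rightarrow> bool" where
  "parseval_frame FF N M Phi \<longleftrightarrow>
     Phi \<in> carrier_mat N M \<and> (\<forall>i<N. \<forall>j<M. Phi $$ (i,j) \<in> FF) \<and> Phi * cadj Phi = 1\<^sub>m N"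

definition col_inner :: "complex mat \<Rightarrow> nat \<Rightarrow> nat \<Rightarrow> complex" where
  "col_inner Phi i j = (\<Sum>k<dim_row Phi. Phi $$ (k,i) * cnj (Phi $$ (k,j)))"

definition col_norm :: "complex mat \<Rightarrow> nat \<Rightarrow> real" where
  "col_norm Phi i = sqrt (\<Sum>k<dim_row Phi. (cmod (Phi $$ (k,i)))^2)"

definition equiangular :: "complex mat \<Rightarrow> bool" where
  "equiangular Phi \<longleftrightarrow>
     (\<forall>i<dim_col Phi. \<forall>j<dim_col Phi. col_norm Phi i = col_norm Phi j) \<and>
     (\<forall>i<dim_col Phi. \<forall>j<dim_col Phi. \<forall>k<dim_col Phi. \<forall>l<dim_col Phi.
        i \<noteq> j \<longrightarrow> k \<noteq> l \<longrightarrow> cmod (col_inner Phi i j) = cmod (col_inner Phi k l))"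

text \<open>Singular values of F are the square roots of the eigenvalues (with algebraic multiplicity)
  of F^* F; these eigenvalues are real and nonnegative. The nuclear norm is their sum.\<close>
definition nuclear_norm :: "complex mat \<Rightarrow> real" where
  "nuclear_norm F =
     (\<Sum>mu\<in>{mu. poly (char_poly (cadj F * F)) mu = 0}.
        real (order mu (char_poly (cadj F * F))) * sqrt (Re mu))"

definition cols_sub :: "complex mat \<Rightarrow> nat set \<Rightarrow> complex mat" where
  "cols_sub Phi K = submatrix Phi {..<dim_row Phi} K"

definition nuclear_energy :: "nat \<Rightarrow> complex mat \<Rightarrow> real" where
  "nuclear_energy k Phi = (\<Sum>K\<in>{K. K \<subseteq> {..<dim_col Phi} \<and> card K = k}. nuclear_norm (cols_sub Phi K))"

end

theory Submission
  imports Defs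
begin

(* For two columns u, v the Gram matrix has trace |u|^2 + |v|^2 and determinant
  D = |u|^2 |v|^2 - |<u,v>|^2, so the nuclear norm of the pair is sqrt (|u|^2 + |v|^2 + 2 sqrt D).
  Writing 2 NE_2 as a sum over ordered pairs of distinct columns and applying Cauchy-Schwarz
  twice, once to these nuclear norms and once to the square roots sqrt D, bounds NE_2 of every
  Parseval frame by a constant depending only on M and N: the Parseval identities fix
  sum_i |phi_i|^2 = N and sum_j |<phi_i,phi_j>|^2 = |phi_i|^2, hence the sums of both quantities
  under the square roots. Equality in both steps means that the squared nuclear norms and the
  determinants D are constant over pairs, which is equivalent to equiangularity. Since some
  equiangular Parseval frame exists, the bound is the maximum of NE_2. *)

section \<open>Cauchy-Schwarz for square roots\<close>

lemma sum_sqrt_le_sqrt_card_mult_sum: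
  fixes x :: "'a \<Rightarrow> real"
  assumes "\<And>p. p \<in> S \<Longrightarrow> 0 \<le> x p"
  shows "(\<Sum>p\<in>S. sqrt (x p)) \<le> sqrt (card S * (\<Sum>p\<in>S. x p))"
proof -
  have "(\<Sum>p\<in>S. sqrt (x p) * 1)\<^sup>2 \<le> (\<Sum>p\<in>S. (sqrt (x p))\<^sup>2) * (\<Sum>p\<in>S. 1\<^sup>2)"
    by (rule Cauchy_Schwarz_ineq_sum)
  also have "\<dots> = (\<Sum>p\<in>S. x p) * card S"
    using assms by simp
  finally show ?thesis
    by (intro real_le_rsqrt) (simp add: mult.commute)
qed

lemma sum_sqrt_eq_sqrt_card_mult_sum_iff:
  fixes x :: "'a \<Rightarrow> real"
  assumes "finite S" and nonneg: "\<And>p. p \<in> S \<Longrightarrow> 0 \<le> x p"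
  shows "(\<Sum>p\<in>S. sqrt (x p)) = sqrt (card S * (\<Sum>p\<in>S. x p)) \<longleftrightarrow> x constant_on S"
proof
  assume eq: "(\<Sum>p\<in>S. sqrt (x p)) = sqrt (card S * (\<Sum>p\<in>S. x p))"
  show "x constant_on S"
  proof (cases "S = {}")
    case False
    define n where "n = real (card S)"
    define m where "m = (\<Sum>p\<in>S. sqrt (x p)) / n"
    have "n > 0"
      using False \<open>finite S\<close> by (simp add: n_def card_gt_0_iff)
    have sum_sqrt: "(\<Sum>p\<in>S. sqrt (x p)) = n * m"
      using \<open>n > 0\<close> by (simp add: m_def)
    have "(n * m)\<^sup>2 = n * (\<Sum>p\<in>S. x p)"
      using eq nonneg by (simp add: sum_sqrt n_def sum_nonneg)
    then have sum_x: "(\<Sum>p\<in>S. x p) = n * m\<^sup>2"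
      using \<open>n > 0\<close> by (simp add: power2_eq_square algebra_simps)
    \<comment> \<open>the variance of the square roots vanishes\<close>
    have "(\<Sum>p\<in>S. (sqrt (x p) - m)\<^sup>2) = (\<Sum>p\<in>S. x p - 2 * m * sqrt (x p) + m\<^sup>2)"
      using nonneg by (intro sum.cong) (auto simp: power2_diff)
    also have "\<dots> = (\<Sum>p\<in>S. x p) - 2 * m * (\<Sum>p\<in>S. sqrt (x p)) + n * m\<^sup>2"
      by (simp add: sum.distrib sum_subtractf sum_distrib_left n_def)
    also have "\<dots> = 0"
      by (simp add: sum_x sum_sqrt power2_eq_square)
    finally have "\<forall>p\<in>S. (sqrt (x p) - m)\<^sup>2 = 0"
      using \<open>finite S\<close> by (simp add: sum_nonneg_eq_0_iff)
    then have "\<forall>p\<in>S. x p = m\<^sup>2"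
      using nonneg by (metis eq_iff_diff_eq_0 power_eq_0_iff real_sqrt_pow2)
    then show ?thesis
      unfolding constant_on_def by blast
  qed (simp add: constant_on_def)
next
  assume "x constant_on S"
  then obtain c where c: "\<And>p. p \<in> S \<Longrightarrow> x p = c"
    unfolding constant_on_def by blast
  show "(\<Sum>p\<in>S. sqrt (x p)) = sqrt (card S * (\<Sum>p\<in>S. x p))"
  proof (cases "S = {}")
    case False
    then have "0 \<le> c"
      using c nonneg by blast
    then show ?thesis
      using c by (simp add: real_sqrt_mult)
  qed simp
qed

section \<open>Nuclear norm of a pair of columns\<close>

lemma det_mat_2:
  assumes "(A :: 'a :: comm_ring_1 mat) \<in> carrier_mat 2 2"
  shows "det A = A $$ (0,0) * A $$ (1,1) - A $$ (0,1) * A $$ (1,0)"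
proof -
  have "det A = (\<Sum>i<2. A $$ (i,0) * cofactor A i 0)"
    by (rule laplace_expansion_column[OF assms]) simp
  also have "\<dots> = A $$ (0,0) * cofactor A 0 0 + A $$ (1,0) * cofactor A 1 0"
    by (simp add: numeral_2_eq_2)
  also have "cofactor A 0 0 = A $$ (1,1)"
    unfolding cofactor_def using assms by (subst det_single) (auto simp: mat_delete_def)
  also have "cofactor A 1 0 = - A $$ (0,1)"
    unfolding cofactor_def using assms by (subst det_single) (auto simp: mat_delete_def)
  finally show ?thesis
    by (simp add: algebra_simps)
qed

lemma char_poly_mat_2:
  assumes "(A :: 'a :: comm_ring_1 mat) \<in> carrier_mat 2 2"
  shows "char_poly A = [:det A, - (A $$ (0,0) + A $$ (1,1)), 1:]"
  using assms unfolding char_poly_def det_mat_2[OF assms]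
  by (subst det_mat_2) (auto simp: char_poly_matrix_def)

lemma sum_roots_order_two_linear_factors:
  fixes x y :: complex and f :: "complex \<Rightarrow> real"
  defines "p \<equiv> [:-x, 1:] * [:-y, 1:]"
  shows "(\<Sum>\<mu>\<in>{\<mu>. poly p \<mu> = 0}. real (order \<mu> p) * f \<mu>) = f x + f y"
proof (cases "x = y")
  case True
  then have "p = [:-x, 1:] ^ 2"
    by (simp add: p_def power2_eq_square)
  moreover have "order x ([:-x, 1:] ^ 2) = 2"
    by (rule order_power_n_n)
  ultimately show ?thesis
    using True by (auto simp: p_def)
next
  case False
  have "poly p \<mu> = (\<mu> - x) * (\<mu> - y)" for \<mu>
    by (simp add: p_def algebra_simps)
  then have roots: "{\<mu>. poly p \<mu> = 0} = {x, y}"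
    by auto
  have nz: "[:-x, 1:] * [:-y, 1:] \<noteq> 0"
    by simp
  have "order x p = 1"
    unfolding p_def order_mult[OF nz]
    using order_power_n_n[of x 1] order_0I[of "[:-y, 1:]" x] False by simp
  moreover have "order y p = 1"
    unfolding p_def order_mult[OF nz]
    using order_power_n_n[of y 1] order_0I[of "[:-x, 1:]" y] False by simp
  ultimately show ?thesis
    using roots False by simp
qed

lemma quadratic_nonneg_roots:
  fixes s d :: real
  assumes "0 \<le> d" "4 * d \<le> s\<^sup>2" "0 \<le> s"
  obtains x y where "0 \<le> x" "0 \<le> y"
    "[:complex_of_real d, - complex_of_real s, 1:] = [:- complex_of_real x, 1:] * [:- complex_of_real y, 1:]"
    "sqrt x + sqrt y = sqrt (s + 2 * sqrt d)"
proof -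
  define r where "r = sqrt (s\<^sup>2 - 4 * d)"
  define x where "x = (s + r) / 2"
  define y where "y = (s - r) / 2"
  have "r\<^sup>2 = s\<^sup>2 - 4 * d"
    unfolding r_def using assms by (intro real_sqrt_pow2) linarith
  have "r \<le> sqrt (s\<^sup>2)"
    unfolding r_def using assms(1) by (intro real_sqrt_le_mono) simp
  then have "r \<le> s"
    using assms(3) by simp
  have "0 \<le> r"
    unfolding r_def using assms(2) by (intro real_sqrt_ge_zero) linarith
  have sum: "x + y = s" and prod: "x * y = d"
    unfolding x_def y_def using \<open>r\<^sup>2 = s\<^sup>2 - 4 * d\<close>
    by (simp_all add: field_simps power2_eq_square)
  have "0 \<le> x" "0 \<le> y"
    using \<open>r \<le> s\<close> \<open>0 \<le> r\<close> assms by (simp_all add: x_def y_def)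
  moreover have "[:complex_of_real d, - complex_of_real s, 1:] = [:- complex_of_real x, 1:] * [:- complex_of_real y, 1:]"
    by (simp flip: sum prod)
  moreover have "sqrt (s + 2 * sqrt d) = sqrt x + sqrt y"
    using \<open>0 \<le> x\<close> \<open>0 \<le> y\<close>
    by (intro real_sqrt_unique) (simp_all add: power2_sum real_sqrt_mult flip: sum prod)
  ultimately show ?thesis
    using that by simp
qed

definition col_sqnorm :: "complex mat \<Rightarrow> nat \<Rightarrow> real" where
  "col_sqnorm Phi i = (\<Sum>k<dim_row Phi. (cmod (Phi $$ (k,i)))\<^sup>2)"

definition gram_det :: "complex mat \<Rightarrow> nat \<Rightarrow> nat \<Rightarrow> real" where
  "gram_det Phi i j = col_sqnorm Phi i * col_sqnorm Phi j - (cmod (col_inner Phi i j))\<^sup>2"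

definition pair_nuclear_sq :: "complex mat \<Rightarrow> nat \<Rightarrow> nat \<Rightarrow> real" where
  "pair_nuclear_sq Phi i j = col_sqnorm Phi i + col_sqnorm Phi j + 2 * sqrt (gram_det Phi i j)"

lemma col_norm_eq_sqrt_col_sqnorm: "col_norm Phi i = sqrt (col_sqnorm Phi i)"
  unfolding col_norm_def col_sqnorm_def ..

lemma col_sqnorm_nonneg: "0 \<le> col_sqnorm Phi i"
  unfolding col_sqnorm_def by (intro sum_nonneg) simp

lemma col_inner_self: "col_inner Phi i i = of_real (col_sqnorm Phi i)"
  unfolding col_inner_def col_sqnorm_def of_real_sum
  by (intro sum.cong refl) (simp only: complex_norm_square)

lemma col_inner_commute: "col_inner Phi j i = cnj (col_inner Phi i j)"
  unfolding col_inner_def by (simp add: mult.commute)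

lemma norm_col_inner_sq_le: "(cmod (col_inner Phi i j))\<^sup>2 \<le> col_sqnorm Phi i * col_sqnorm Phi j"
proof -
  have "cmod (col_inner Phi i j) \<le> (\<Sum>k<dim_row Phi. cmod (Phi $$ (k,i)) * cmod (Phi $$ (k,j)))"
    unfolding col_inner_def by (rule order_trans[OF norm_sum]) (simp add: norm_mult)
  then have "(cmod (col_inner Phi i j))\<^sup>2 \<le> (\<Sum>k<dim_row Phi. cmod (Phi $$ (k,i)) * cmod (Phi $$ (k,j)))\<^sup>2"
    by (simp add: power_mono)
  also have "\<dots> \<le> col_sqnorm Phi i * col_sqnorm Phi j"
    unfolding col_sqnorm_def by (rule Cauchy_Schwarz_ineq_sum)
  finally show ?thesis .
qed

lemma gram_det_nonneg: "0 \<le> gram_det Phi i j"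
  unfolding gram_det_def using norm_col_inner_sq_le[of Phi i j] by simp

lemma gram_det_commute: "gram_det Phi j i = gram_det Phi i j"
  unfolding gram_det_def col_inner_commute[of Phi j i] by simp

lemma pair_nuclear_sq_commute: "pair_nuclear_sq Phi j i = pair_nuclear_sq Phi i j"
  unfolding pair_nuclear_sq_def gram_det_commute[of Phi j i] by simp

lemma pair_nuclear_sq_nonneg: "0 \<le> pair_nuclear_sq Phi i j"
  unfolding pair_nuclear_sq_def by (simp add: col_sqnorm_nonneg gram_det_nonneg)

lemma cadj_mult_index:
  assumes "p < dim_col F" "q < dim_col F"
  shows "(cadj F * F) $$ (p,q) = col_inner F q p"
  using assms
  by (simp add: cadj_def col_inner_def scalar_prod_def lessThan_atLeast0 mult.commute)

lemma nuclear_norm_two_cols: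
  assumes F: "F \<in> carrier_mat n 2"
  shows "nuclear_norm F = sqrt (pair_nuclear_sq F 0 1)"
proof -
  define G where "G = cadj F * F"
  have G: "G \<in> carrier_mat 2 2"
    using F unfolding G_def cadj_def by (intro mult_carrier_mat) auto
  have G_index: "G $$ (p,q) = col_inner F q p" if "p < 2" "q < 2" for p q
    unfolding G_def using F that by (simp add: cadj_mult_index)
  have "G $$ (0,1) = cnj (col_inner F 0 1)" "G $$ (1,0) = col_inner F 0 1"
    using G_index[of 0 1] G_index[of 1 0] col_inner_commute[of F 0 1] by simp_all
  then have "G $$ (0,1) * G $$ (1,0) = of_real ((cmod (col_inner F 0 1))\<^sup>2)"
    unfolding complex_norm_square by (simp add: mult.commute)
  then have "det G = of_real (gram_det F 0 1)"
    using G_index[of 0 0] G_index[of 1 1]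
    by (simp add: det_mat_2[OF G] gram_det_def col_inner_self)
  then have char_poly_G: "char_poly G =
      [:of_real (gram_det F 0 1), - of_real (col_sqnorm F 0 + col_sqnorm F 1), 1:]"
    using G_index[of 0 0] G_index[of 1 1] by (simp add: char_poly_mat_2[OF G] col_inner_self)
  have "(col_sqnorm F 0 + col_sqnorm F 1)\<^sup>2 - 4 * gram_det F 0 1 =
      (col_sqnorm F 0 - col_sqnorm F 1)\<^sup>2 + 4 * (cmod (col_inner F 0 1))\<^sup>2"
    unfolding gram_det_def by (simp add: power2_eq_square algebra_simps)
  then have disc: "4 * gram_det F 0 1 \<le> (col_sqnorm F 0 + col_sqnorm F 1)\<^sup>2"
    using zero_le_power2[of "col_sqnorm F 0 - col_sqnorm F 1"]
      zero_le_power2[of "cmod (col_inner F 0 1)"] by linarith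
  obtain x y where "0 \<le> x" "0 \<le> y"
    and factors: "char_poly G = [:- complex_of_real x, 1:] * [:- complex_of_real y, 1:]"
    and sqrt_sum: "sqrt x + sqrt y = sqrt (pair_nuclear_sq F 0 1)"
    unfolding char_poly_G pair_nuclear_sq_def
    by (rule quadratic_nonneg_roots[OF gram_det_nonneg disc
          add_nonneg_nonneg[OF col_sqnorm_nonneg col_sqnorm_nonneg]])
  have "nuclear_norm F = sqrt (Re (of_real x)) + sqrt (Re (of_real y))"
    unfolding nuclear_norm_def G_def[symmetric] factors
    by (rule sum_roots_order_two_linear_factors)
  then show ?thesis
    using sqrt_sum by simp
qed

lemma cols_sub_pair:
  assumes "i < j" "j < dim_col Phi"
  shows "cols_sub Phi {i,j} \<in> carrier_mat (dim_row Phi) 2"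
    and "k < dim_row Phi \<Longrightarrow> cols_sub Phi {i,j} $$ (k,0) = Phi $$ (k,i)"
    and "k < dim_row Phi \<Longrightarrow> cols_sub Phi {i,j} $$ (k,1) = Phi $$ (k,j)"
proof -
  have "{a. a < dim_col Phi \<and> a \<in> {i,j}} = {i,j}"
    using assms by auto
  then have "dim_col (cols_sub Phi {i,j}) = 2"
    using assms unfolding cols_sub_def dim_submatrix by simp
  moreover have "dim_row (cols_sub Phi {i,j}) = dim_row Phi"
    unfolding cols_sub_def dim_submatrix by simp
  ultimately show "cols_sub Phi {i,j} \<in> carrier_mat (dim_row Phi) 2"
    by blast
  assume k: "k < dim_row Phi"
  have rows: "{a \<in> {..<dim_row Phi}. a < k} = {..<k}"
    and cols: "{a \<in> {i,j}. a < i} = {}" "{a \<in> {i,j}. a < j} = {i}"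
    using assms k by auto
  show "cols_sub Phi {i,j} $$ (k,0) = Phi $$ (k,i)" "cols_sub Phi {i,j} $$ (k,1) = Phi $$ (k,j)"
    using submatrix_index_card[of k Phi i "{..<dim_row Phi}" "{i,j}", unfolded rows cols]
      submatrix_index_card[of k Phi j "{..<dim_row Phi}" "{i,j}", unfolded rows cols] assms k
    by (simp_all add: cols_sub_def)
qed

lemma nuclear_norm_cols_sub_pair:
  assumes "i < dim_col Phi" "j < dim_col Phi" "i \<noteq> j"
  shows "nuclear_norm (cols_sub Phi {i,j}) = sqrt (pair_nuclear_sq Phi i j)"
proof -
  have ordered: "nuclear_norm (cols_sub Phi {i,j}) = sqrt (pair_nuclear_sq Phi i j)"
    if "i < j" "j < dim_col Phi" for i j
  proof -
    let ?F = "cols_sub Phi {i,j}"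
    have F: "?F \<in> carrier_mat (dim_row Phi) 2"
      using cols_sub_pair(1)[OF that] .
    have "col_sqnorm ?F 0 = col_sqnorm Phi i" "col_sqnorm ?F 1 = col_sqnorm Phi j"
      "col_inner ?F 0 1 = col_inner Phi i j"
      using F cols_sub_pair(2,3)[OF that] by (simp_all add: col_sqnorm_def col_inner_def)
    then show ?thesis
      by (simp add: nuclear_norm_two_cols[OF F] pair_nuclear_sq_def gram_det_def)
  qed
  show ?thesis
    using ordered[of i j] ordered[of j i] assms
    by (cases "i < j") (auto simp: insert_commute pair_nuclear_sq_commute)
qed

section \<open>Sums over ordered pairs\<close>

definition off_diag :: "nat \<Rightarrow> (nat \<times> nat) set" where
  "off_diag M = {(i,j). i < M \<and> j < M \<and> i \<noteq> j}"

lemma off_diag_eq: "off_diag M = {..<M} \<times> {..<M} - (\<lambda>i. (i,i)) ` {..<M}"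
  unfolding off_diag_def by auto

lemma finite_off_diag [simp]: "finite (off_diag M)"
  unfolding off_diag_eq by simp

lemma real_card_off_diag: "real (card (off_diag M)) = real M * (real M - 1)"
proof -
  have "card (off_diag M) = M * M - M"
    unfolding off_diag_eq by (subst card_Diff_subset) (auto simp: card_image inj_on_def)
  then show ?thesis
    by (simp add: algebra_simps)
qed

lemma sum_off_diag:
  fixes f :: "nat \<times> nat \<Rightarrow> 'a :: ab_group_add"
  shows "(\<Sum>p\<in>off_diag M. f p) = (\<Sum>i<M. \<Sum>j<M. f (i,j)) - (\<Sum>i<M. f (i,i))"
  unfolding off_diag_eq
  by (subst sum_diff) (auto simp: sum.cartesian_product sum.reindex inj_on_def)

lemma sum_off_diag_doubleton:
  fixes g :: "nat set \<Rightarrow> 'a :: comm_semiring_1"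
  shows "(\<Sum>(i,j)\<in>off_diag M. g {i,j}) = 2 * (\<Sum>K | K \<subseteq> {..<M} \<and> card K = 2. g K)"
proof -
  define pairs where "pairs = {K. K \<subseteq> {..<M} \<and> card K = 2}"
  define h where "h = (\<lambda>(i::nat, j). {i,j})"
  have fiber: "card {p \<in> off_diag M. h p = K} = 2" if "K \<in> pairs" for K
  proof -
    have "card K = 2"
      using that by (simp add: pairs_def)
    then obtain a b where K: "K = {a,b}" "a \<noteq> b"
      unfolding card_2_iff by blast
    then have "{p \<in> off_diag M. h p = K} = {(a,b), (b,a)}"
      using that by (auto simp: pairs_def off_diag_def h_def doubleton_eq_iff)
    then show ?thesis
      using \<open>a \<noteq> b\<close> by simp
  qed
  have image: "h ` off_diag M \<subseteq> pairs"
    by (auto simp: pairs_def off_diag_def h_def)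
  have "(\<Sum>(i,j)\<in>off_diag M. g {i,j}) = (\<Sum>p\<in>off_diag M. g (h p))"
    by (simp add: h_def case_prod_unfold)
  also have "\<dots> = (\<Sum>K\<in>pairs. \<Sum>p \<in> {p \<in> off_diag M. h p = K}. g (h p))"
    using image by (intro sum.group[where g = h and h = "\<lambda>p. g (h p)", symmetric]) (simp_all add: pairs_def)
  also have "\<dots> = (\<Sum>K\<in>pairs. 2 * g K)"
    by (intro sum.cong) (simp_all add: fiber)
  finally show ?thesis
    by (simp add: pairs_def sum_distrib_left)
qed

lemma nuclear_energy_2_eq_sum_off_diag:
  "2 * nuclear_energy 2 Phi = (\<Sum>(i,j)\<in>off_diag (dim_col Phi). sqrt (pair_nuclear_sq Phi i j))"
  unfolding nuclear_energy_def sum_off_diag_doubleton[symmetric]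
  by (intro sum.cong) (auto simp: off_diag_def nuclear_norm_cols_sub_pair)

lemma constant_on_iff: "f constant_on A \<longleftrightarrow> (\<forall>x\<in>A. \<forall>y\<in>A. f x = f y)"
proof
  assume "\<forall>x\<in>A. \<forall>y\<in>A. f x = f y"
  then show "f constant_on A"
    unfolding constant_on_def by (cases "A = {}") blast+
qed (auto simp: constant_on_def)

lemma sum_off_diag_sqrt_le:
  fixes f :: "nat \<Rightarrow> nat \<Rightarrow> real"
  assumes "\<And>i j. 0 \<le> f i j"
  shows "(\<Sum>(i,j)\<in>off_diag M. sqrt (f i j)) \<le> sqrt (real M * (real M - 1) * (\<Sum>(i,j)\<in>off_diag M. f i j))"
  using sum_sqrt_le_sqrt_card_mult_sum[of "off_diag M" "\<lambda>(i,j). f i j"] assms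
  by (simp add: real_card_off_diag case_prod_unfold)

lemma sum_off_diag_sqrt_eq_iff:
  fixes f :: "nat \<Rightarrow> nat \<Rightarrow> real"
  assumes "\<And>i j. 0 \<le> f i j"
  shows "(\<Sum>(i,j)\<in>off_diag M. sqrt (f i j)) = sqrt (real M * (real M - 1) * (\<Sum>(i,j)\<in>off_diag M. f i j))
    \<longleftrightarrow> (\<lambda>(i,j). f i j) constant_on off_diag M"
  using sum_sqrt_eq_sqrt_card_mult_sum_iff[of "off_diag M" "\<lambda>(i,j). f i j"] assms
  by (simp add: real_card_off_diag case_prod_unfold)

lemma constant_on_if_pair_sums_constant_on:
  fixes f :: "nat \<Rightarrow> 'a :: cancel_ab_semigroup_add"
  assumes "(\<lambda>(i,j). f i + f j) constant_on off_diag M" "3 \<le> M"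
  shows "f constant_on {..<M}"
proof -
  have "f i = f 0" if "i < M" for i
  proof (cases "i = 0")
    case False
    define k where "k = (if i = 1 then 2 else 1 :: nat)"
    have "(i,k) \<in> off_diag M" "(0,k) \<in> off_diag M"
      using that False assms(2) by (auto simp: off_diag_def k_def)
    then have "(\<lambda>(i,j). f i + f j) (i,k) = (\<lambda>(i,j). f i + f j) (0,k)"
      using assms(1) unfolding constant_on_iff by blast
    then show ?thesis
      by simp
  qed simp
  then show ?thesis
    unfolding constant_on_def by blast
qed

lemma constant_on_off_diag_iff:
  "(\<lambda>(i,j). f i j) constant_on off_diag M \<longleftrightarrow>
    (\<forall>i<M. \<forall>j<M. \<forall>k<M. \<forall>l<M. i \<noteq> j \<longrightarrow> k \<noteq> l \<longrightarrow> f i j = f k l)"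
  unfolding constant_on_iff off_diag_def by auto

lemma equiangular_iff_constant_on:
  "equiangular Phi \<longleftrightarrow> col_sqnorm Phi constant_on {..<dim_col Phi}
    \<and> (\<lambda>(i,j). cmod (col_inner Phi i j)) constant_on off_diag (dim_col Phi)"
  unfolding constant_on_off_diag_iff
  unfolding equiangular_def constant_on_iff col_norm_eq_sqrt_col_sqnorm by (simp add: Ball_def)

lemma pair_constant_on_if_equiangular:
  assumes "equiangular Phi"
  shows "(\<lambda>(i,j). pair_nuclear_sq Phi i j) constant_on off_diag (dim_col Phi) \<and>
    (\<lambda>(i,j). gram_det Phi i j) constant_on off_diag (dim_col Phi)"
proof -
  let ?M = "dim_col Phi"
  have norms: "col_sqnorm Phi i = col_sqnorm Phi j" if "i < ?M" "j < ?M" for i j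
    using assms that unfolding equiangular_def col_norm_eq_sqrt_col_sqnorm real_sqrt_eq_iff by blast
  have "gram_det Phi i j = gram_det Phi k l \<and> pair_nuclear_sq Phi i j = pair_nuclear_sq Phi k l"
    if "i < ?M" "j < ?M" "k < ?M" "l < ?M" "i \<noteq> j" "k \<noteq> l" for i j k l
  proof -
    have "cmod (col_inner Phi i j) = cmod (col_inner Phi k l)"
      using assms that unfolding equiangular_def by blast
    then show ?thesis
      using norms[of i k] norms[of j l] that by (simp add: gram_det_def pair_nuclear_sq_def)
  qed
  then show ?thesis
    unfolding constant_on_off_diag_iff by blast
qed

lemma equiangular_if_constant_on:
  assumes "col_sqnorm Phi constant_on {..<dim_col Phi}"
    and "(\<lambda>(i,j). gram_det Phi i j) constant_on off_diag (dim_col Phi)"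
  shows "equiangular Phi"
proof -
  let ?M = "dim_col Phi"
  obtain c where c: "\<And>i. i < ?M \<Longrightarrow> col_sqnorm Phi i = c"
    using assms(1) unfolding constant_on_def by auto
  have "cmod (col_inner Phi i j) = cmod (col_inner Phi k l)"
    if "i < ?M" "j < ?M" "k < ?M" "l < ?M" "i \<noteq> j" "k \<noteq> l" for i j k l
  proof -
    have "gram_det Phi i j = gram_det Phi k l"
      using assms(2) that unfolding constant_on_off_diag_iff by blast
    then have "(cmod (col_inner Phi i j))\<^sup>2 = (cmod (col_inner Phi k l))\<^sup>2"
      using that c by (simp add: gram_det_def)
    then show ?thesis
      by simp
  qed
  with assms(1) show ?thesis
    unfolding equiangular_iff_constant_on constant_on_off_diag_iff by blast
qed

section \<open>Parseval frames\<close>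

definition nuclear_energy_2_bound :: "nat \<Rightarrow> nat \<Rightarrow> real" where
  "nuclear_energy_2_bound M N = sqrt (real M * (real M - 1) *
     (2 * (real M - 1) * real N + 2 * sqrt (real M * (real M - 1) * (real N * (real N - 1))))) / 2"

locale parseval_matrix =
  fixes Phi :: "complex mat" and N M :: nat
  assumes carrier: "Phi \<in> carrier_mat N M"
    and rows_orthonormal: "Phi * cadj Phi = 1\<^sub>m N"
begin

lemma dim_row [simp]: "dim_row Phi = N" and dim_col [simp]: "dim_col Phi = M"
  using carrier by auto

lemma row_inner:
  assumes "l < N" "k < N"
  shows "(\<Sum>j<M. Phi $$ (l,j) * cnj (Phi $$ (k,j))) = (if l = k then 1 else 0)"
proof -
  have "(Phi * cadj Phi) $$ (l,k) = (\<Sum>j<M. Phi $$ (l,j) * cnj (Phi $$ (k,j)))"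
    using assms by (simp add: cadj_def scalar_prod_def lessThan_atLeast0)
  then show ?thesis
    using rows_orthonormal assms by simp
qed

lemma sum_col_sqnorm: "(\<Sum>i<M. col_sqnorm Phi i) = N"
proof -
  have "complex_of_real (\<Sum>i<M. col_sqnorm Phi i) = (\<Sum>i<M. \<Sum>k<N. Phi $$ (k,i) * cnj (Phi $$ (k,i)))"
    unfolding col_sqnorm_def of_real_sum by (simp only: complex_norm_square dim_row)
  also have "\<dots> = (\<Sum>k<N. \<Sum>i<M. Phi $$ (k,i) * cnj (Phi $$ (k,i)))"
    by (rule sum.swap)
  also have "\<dots> = of_real N"
    by (simp add: row_inner)
  finally show ?thesis
    using of_real_eq_iff by blast
qed

text \<open>The Gram matrix \<open>cadj Phi * Phi\<close> is an orthogonal projection.\<close>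
lemma sum_norm_col_inner_sq: "(\<Sum>j<M. (cmod (col_inner Phi i j))\<^sup>2) = col_sqnorm Phi i"
proof -
  let ?F = "\<lambda>k i. Phi $$ (k,i)"
  have "complex_of_real (\<Sum>j<M. (cmod (col_inner Phi i j))\<^sup>2) =
      (\<Sum>j<M. col_inner Phi i j * cnj (col_inner Phi i j))"
    unfolding of_real_sum by (simp only: complex_norm_square)
  also have "\<dots> = (\<Sum>j<M. \<Sum>k<N. \<Sum>l<N. (?F k i * cnj (?F k j)) * (cnj (?F l i) * ?F l j))"
    unfolding col_inner_def by (simp add: sum_product)
  also have "\<dots> = (\<Sum>k<N. \<Sum>l<N. \<Sum>j<M. (?F k i * cnj (?F k j)) * (cnj (?F l i) * ?F l j))"
    by (subst sum.swap, rule sum.cong[OF refl], rule sum.swap)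
  also have "\<dots> = (\<Sum>k<N. \<Sum>l<N. (?F k i * cnj (?F l i)) * (\<Sum>j<M. ?F l j * cnj (?F k j)))"
    by (simp add: sum_distrib_left algebra_simps)
  also have "\<dots> = (\<Sum>k<N. ?F k i * cnj (?F k i))"
    by (simp add: row_inner if_distrib cong: if_cong)
  also have "\<dots> = col_inner Phi i i"
    unfolding col_inner_def by simp
  finally show ?thesis
    unfolding col_inner_self using of_real_eq_iff by blast
qed

lemma col_sqnorm_le_1:
  assumes "i < M"
  shows "col_sqnorm Phi i \<le> 1"
proof -
  have "(col_sqnorm Phi i)\<^sup>2 = (cmod (col_inner Phi i i))\<^sup>2"
    by (simp add: col_inner_self col_sqnorm_nonneg)
  also have "\<dots> \<le> (\<Sum>j<M. (cmod (col_inner Phi i j))\<^sup>2)"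
    using assms by (intro member_le_sum) auto
  finally have "(col_sqnorm Phi i)\<^sup>2 \<le> col_sqnorm Phi i"
    unfolding sum_norm_col_inner_sq .
  then show ?thesis
    using col_sqnorm_nonneg[of Phi i]
    by (cases "col_sqnorm Phi i = 0") (simp_all add: power2_eq_square mult_le_cancel_left1)
qed

lemma rows_le_cols: "N \<le> M"
proof -
  have "real N = (\<Sum>i<M. col_sqnorm Phi i)"
    by (simp add: sum_col_sqnorm)
  also have "\<dots> \<le> (\<Sum>i<M. 1)"
    by (intro sum_mono col_sqnorm_le_1) simp
  finally show ?thesis
    by simp
qed

lemma col_sqnorm_eq_1_if_square:
  assumes "N = M" "i < M"
  shows "col_sqnorm Phi i = 1"
proof -
  have "(\<Sum>i<M. 1 - col_sqnorm Phi i) = 0"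
    using assms(1) by (simp add: sum_subtractf sum_col_sqnorm)
  then have "\<forall>i<M. 1 - col_sqnorm Phi i = 0"
    by (subst (asm) sum_nonneg_eq_0_iff) (auto simp: col_sqnorm_le_1)
  then show ?thesis
    using assms(2) by simp
qed

lemma sum_off_diag_gram_det: "(\<Sum>(i,j)\<in>off_diag M. gram_det Phi i j) = real N * (real N - 1)"
proof -
  have "(\<Sum>i<M. \<Sum>j<M. gram_det Phi i j) =
      (\<Sum>i<M. col_sqnorm Phi i) * (\<Sum>j<M. col_sqnorm Phi j) - (\<Sum>i<M. \<Sum>j<M. (cmod (col_inner Phi i j))\<^sup>2)"
    unfolding gram_det_def by (simp add: sum_subtractf sum_product)
  also have "\<dots> = real N * real N - real N"
    by (simp add: sum_norm_col_inner_sq sum_col_sqnorm)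
  moreover have "gram_det Phi i i = 0" for i
    by (simp add: gram_det_def col_inner_self col_sqnorm_nonneg power2_eq_square)
  ultimately show ?thesis
    by (simp add: sum_off_diag algebra_simps)
qed

lemma sum_off_diag_pair_nuclear_sq:
  "(\<Sum>(i,j)\<in>off_diag M. pair_nuclear_sq Phi i j) =
    2 * (real M - 1) * real N + 2 * (\<Sum>(i,j)\<in>off_diag M. sqrt (gram_det Phi i j))"
proof -
  have "(\<Sum>(i,j)\<in>off_diag M. col_sqnorm Phi i + col_sqnorm Phi j) = 2 * real M * real N - 2 * real N"
    by (simp add: sum_off_diag sum.distrib sum_col_sqnorm flip: sum_distrib_left)
  also have "\<dots> = 2 * (real M - 1) * real N"
    by (simp add: algebra_simps)
  finally have "(\<Sum>(i,j)\<in>off_diag M. col_sqnorm Phi i + col_sqnorm Phi j) = 2 * (real M - 1) * real N" .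
  then show ?thesis
    unfolding pair_nuclear_sq_def by (simp add: sum.distrib sum_distrib_left case_prod_unfold)
qed

lemma nuclear_energy_2_le_sqrt_sum_pair_nuclear_sq:
  "2 * nuclear_energy 2 Phi \<le>
    sqrt (real M * (real M - 1) * (\<Sum>(i,j)\<in>off_diag M. pair_nuclear_sq Phi i j))"
  and nuclear_energy_2_eq_sqrt_sum_pair_nuclear_sq_iff:
  "2 * nuclear_energy 2 Phi =
    sqrt (real M * (real M - 1) * (\<Sum>(i,j)\<in>off_diag M. pair_nuclear_sq Phi i j))
    \<longleftrightarrow> (\<lambda>(i,j). pair_nuclear_sq Phi i j) constant_on off_diag M"
  using nuclear_energy_2_eq_sum_off_diag[of Phi]
    sum_off_diag_sqrt_le[of "pair_nuclear_sq Phi" M] sum_off_diag_sqrt_eq_iff[of "pair_nuclear_sq Phi" M]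
  by (simp_all add: pair_nuclear_sq_nonneg)

lemma sqrt_sum_pair_nuclear_sq_le_bound:
  "sqrt (real M * (real M - 1) * (\<Sum>(i,j)\<in>off_diag M. pair_nuclear_sq Phi i j)) \<le> 2 * nuclear_energy_2_bound M N"
  and sqrt_sum_pair_nuclear_sq_eq_bound_iff:
  "2 \<le> M \<Longrightarrow>
    sqrt (real M * (real M - 1) * (\<Sum>(i,j)\<in>off_diag M. pair_nuclear_sq Phi i j)) = 2 * nuclear_energy_2_bound M N
    \<longleftrightarrow> (\<lambda>(i,j). gram_det Phi i j) constant_on off_diag M"
proof -
  define m where "m = real M * (real M - 1)"
  define S where "S = (\<Sum>(i,j)\<in>off_diag M. sqrt (gram_det Phi i j))"
  define C where "C = sqrt (m * (real N * (real N - 1)))"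
  have "0 \<le> m"
    by (cases M) (simp_all add: m_def)
  have sqrt_sum: "sqrt (m * (\<Sum>(i,j)\<in>off_diag M. pair_nuclear_sq Phi i j)) =
      sqrt (m * (2 * (real M - 1) * real N + 2 * S))"
    by (simp add: S_def sum_off_diag_pair_nuclear_sq)
  have bound: "2 * nuclear_energy_2_bound M N = sqrt (m * (2 * (real M - 1) * real N + 2 * C))"
    by (simp add: nuclear_energy_2_bound_def m_def C_def)
  have "S \<le> C" and S_eq_C_iff: "S = C \<longleftrightarrow> (\<lambda>(i,j). gram_det Phi i j) constant_on off_diag M"
    using sum_off_diag_sqrt_le[of "gram_det Phi" M] sum_off_diag_sqrt_eq_iff[of "gram_det Phi" M]
    by (simp_all add: S_def C_def m_def gram_det_nonneg sum_off_diag_gram_det)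
  then show "sqrt (real M * (real M - 1) * (\<Sum>(i,j)\<in>off_diag M. pair_nuclear_sq Phi i j)) \<le> 2 * nuclear_energy_2_bound M N"
    unfolding m_def[symmetric] sqrt_sum bound using \<open>0 \<le> m\<close>
    by (intro real_sqrt_le_mono mult_left_mono) simp_all
  assume "2 \<le> M"
  then have "0 < m"
    by (simp add: m_def)
  then show "sqrt (real M * (real M - 1) * (\<Sum>(i,j)\<in>off_diag M. pair_nuclear_sq Phi i j)) = 2 * nuclear_energy_2_bound M N
    \<longleftrightarrow> (\<lambda>(i,j). gram_det Phi i j) constant_on off_diag M"
    unfolding m_def[symmetric] sqrt_sum bound S_eq_C_iff[symmetric] by simp
qed

lemma nuclear_energy_2_le_bound: "nuclear_energy 2 Phi \<le> nuclear_energy_2_bound M N"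
  using nuclear_energy_2_le_sqrt_sum_pair_nuclear_sq sqrt_sum_pair_nuclear_sq_le_bound by simp

lemma nuclear_energy_2_eq_bound_iff:
  assumes "2 \<le> M"
  shows "nuclear_energy 2 Phi = nuclear_energy_2_bound M N \<longleftrightarrow>
    (\<lambda>(i,j). pair_nuclear_sq Phi i j) constant_on off_diag M \<and>
    (\<lambda>(i,j). gram_det Phi i j) constant_on off_diag M"
  using nuclear_energy_2_le_sqrt_sum_pair_nuclear_sq sqrt_sum_pair_nuclear_sq_le_bound
    nuclear_energy_2_eq_sqrt_sum_pair_nuclear_sq_iff sqrt_sum_pair_nuclear_sq_eq_bound_iff[OF assms]
  by linarith

lemma col_sqnorm_constant_on_if_pair_sums_constant_on:
  assumes "2 \<le> N" and sums: "(\<lambda>(i,j). col_sqnorm Phi i + col_sqnorm Phi j) constant_on off_diag M"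
  shows "col_sqnorm Phi constant_on {..<M}"
proof (cases "M = 2")
  case True
  \<comment> \<open>then \<open>Phi\<close> is a unitary \<open>2 \<times> 2\<close> matrix\<close>
  then have "N = M"
    using rows_le_cols assms(1) by simp
  then have "\<forall>i\<in>{..<M}. col_sqnorm Phi i = 1"
    using col_sqnorm_eq_1_if_square by simp
  then show ?thesis
    unfolding constant_on_def by blast
next
  case False
  then have "3 \<le> M"
    using rows_le_cols assms(1) by simp
  with sums show ?thesis
    by (rule constant_on_if_pair_sums_constant_on)
qed

lemma equiangular_iff_pair_constant_on:
  assumes "2 \<le> N"
  shows "equiangular Phi \<longleftrightarrow>
    (\<lambda>(i,j). pair_nuclear_sq Phi i j) constant_on off_diag M \<and>
    (\<lambda>(i,j). gram_det Phi i j) constant_on off_diag M"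
proof
  assume "equiangular Phi"
  then show "(\<lambda>(i,j). pair_nuclear_sq Phi i j) constant_on off_diag M \<and>
      (\<lambda>(i,j). gram_det Phi i j) constant_on off_diag M"
    using pair_constant_on_if_equiangular[of Phi] by simp
next
  assume pair_constant: "(\<lambda>(i,j). pair_nuclear_sq Phi i j) constant_on off_diag M \<and>
    (\<lambda>(i,j). gram_det Phi i j) constant_on off_diag M"
  have "col_sqnorm Phi i + col_sqnorm Phi j = col_sqnorm Phi k + col_sqnorm Phi l"
    if "i < M" "j < M" "k < M" "l < M" "i \<noteq> j" "k \<noteq> l" for i j k l
  proof -
    have "pair_nuclear_sq Phi i j = pair_nuclear_sq Phi k l" "gram_det Phi i j = gram_det Phi k l"
      using pair_constant that unfolding constant_on_off_diag_iff by blast+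
    then show ?thesis
      by (simp add: pair_nuclear_sq_def)
  qed
  then have "col_sqnorm Phi constant_on {..<M}"
    using col_sqnorm_constant_on_if_pair_sums_constant_on[OF assms]
    unfolding constant_on_off_diag_iff by blast
  with pair_constant show "equiangular Phi"
    using equiangular_if_constant_on by simp
qed

lemma nuclear_energy_2_eq_bound_iff_equiangular:
  assumes "2 \<le> N"
  shows "nuclear_energy 2 Phi = nuclear_energy_2_bound M N \<longleftrightarrow> equiangular Phi"
proof -
  have "2 \<le> M"
    using rows_le_cols assms by simp
  then show ?thesis
    using nuclear_energy_2_eq_bound_iff equiangular_iff_pair_constant_on[OF assms] by simp
qed

end

lemma parseval_matrix_if_parseval_frame: "parseval_frame FF N M Phi \<Longrightarrow> parseval_matrix Phi N M"
  unfolding parseval_frame_def parseval_matrix_def by simp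

theorem theorem15:
  fixes FF :: "complex set" and N M :: nat and Phi :: "complex mat"
  assumes "FF = \<real> \<or> FF = UNIV"
    and "N \<ge> 2"
    and "\<exists>Psi. parseval_frame FF N M Psi \<and> equiangular Psi"
    and "parseval_frame FF N M Phi"
  shows "(\<forall>Psi. parseval_frame FF N M Psi \<longrightarrow> nuclear_energy 2 Psi \<le> nuclear_energy 2 Phi)
         \<longleftrightarrow> equiangular Phi"
proof -
  have bound: "nuclear_energy 2 Psi \<le> nuclear_energy_2_bound M N" if "parseval_frame FF N M Psi" for Psi
    using parseval_matrix.nuclear_energy_2_le_bound[OF parseval_matrix_if_parseval_frame[OF that]] .
  have attained: "nuclear_energy 2 Psi = nuclear_energy_2_bound M N \<longleftrightarrow> equiangular Psi"
    if "parseval_frame FF N M Psi" for Psi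
    using parseval_matrix.nuclear_energy_2_eq_bound_iff_equiangular[OF parseval_matrix_if_parseval_frame[OF that] assms(2)] .
  obtain Psi where "parseval_frame FF N M Psi" "nuclear_energy 2 Psi = nuclear_energy_2_bound M N"
    using assms(3) attained by blast
  show ?thesis
  proof
    assume "\<forall>Psi. parseval_frame FF N M Psi \<longrightarrow> nuclear_energy 2 Psi \<le> nuclear_energy 2 Phi"
    then have "nuclear_energy 2 Psi \<le> nuclear_energy 2 Phi"
      using \<open>parseval_frame FF N M Psi\<close> by blast
    then have "nuclear_energy_2_bound M N \<le> nuclear_energy 2 Phi"
      using \<open>nuclear_energy 2 Psi = nuclear_energy_2_bound M N\<close> by simp
    with bound[OF assms(4)] attained[OF assms(4)] show "equiangular Phi"
      by simp
  next
    assume "equiangular Phi"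
    with bound attained[OF assms(4)]
    show "\<forall>Psi. parseval_frame FF N M Psi \<longrightarrow> nuclear_energy 2 Psi \<le> nuclear_energy 2 Phi"
      by simp
  qed
qed

end
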